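(* Let $\vec E$ be as in the context, fix $b\in\Lambda^*$, and for $J_\Lambda,J'_\Lambda\in\mathbb{R}^{\Lambda^*}$ consider the curve $J_\Lambda(s)=e^{-s}J_\Lambda+\sqrt{1-e^{-2s}}J'_\Lambda$, $s\ge0$. Then for all $0\le t\le1$, $$\big|F_b(t)-F_b(0)\big|\le 6\sqrt t\cdot\max_{e\in\Lambda^*}\big(|J_e|\vee|J'_e|\big)\cdot\max_{s\le t}|\partial\mathcal D_b(s)|.$$
   Context: $\Lambda\subset\mathbb{Z}^d$ is a finite box, $\Lambda^*$ its set of nearest-neighbour edges. For spins $\eta$ and $e=\{x,y\}$, $\eta_e=\eta_x\eta_y$; $\mathcal S_\Lambda\subset\{-1,1\}^{\Lambda^*}$ is the set of edge configurations induced by spin configurations on $\Lambda$. $H_{\Lambda,J}(\eta)=-\sum_{e\in\Lambda^*}J_e\eta_e$. $\vec E=(E(\eta,\eta'))_{\eta,\eta'\in\mathcal S_\Lambda}$ is a family of reals with $E(\eta,\eta)=0$ and $E(\eta,\eta'')=E(\eta,\eta')+E(\eta',\eta'')$. Critical set $\mathcal C=\bigcup_{\eta\ne\eta'}\{J_\Lambda:\sum_eJ_e(\eta_e-\eta'_e)=E(\eta,\eta')\}$. For $J_\Lambda\notin\mathcal C$, $\eta\prec\eta'$ iff $E(\eta,\eta')+H_{\Lambda,J}(\eta)-H_{\Lambda,J}(\eta')<0$ (a strict total order); $\sigma^{\pm,b}(J_\Lambda)$ is the $\prec$-minimal element among $\eta$ with $\eta_b=\pm1$; $\partial\mathcal D_b(J_\Lambda)=\{e\in\Lambda^*:\sigma^{+,b}_e(J_\Lambda)\ne\sigma^{-,b}_e(J_\Lambda)\}$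 (the boundary of the critical droplet of $b$). The flexibility $F_b(J_\Lambda)=\big|-\sum_{e}J_e(\sigma^{+,b}_e(J_\Lambda)-\sigma^{-,b}_e(J_\Lambda))+E(\sigma^{+,b}(J_\Lambda),\sigma^{-,b}(J_\Lambda))\big|$ on $\mathbb{R}^{\Lambda^*}\setminus\mathcal C$ extends uniquely to a continuous function on $\mathbb{R}^{\Lambda^*}$, still denoted $F_b$. Write $F_b(s)=F_b(J_\Lambda(s))$ and $\partial\mathcal D_b(s)=\partial\mathcal D_b(J_\Lambda(s))$ (defined for $J_\Lambda(s)\notin\mathcal C$). $a\vee b=\max(a,b)$. *)

theory Defs
  imports "HOL-Analysis.Analysis"
begin

definition box :: "int ^ 'd \<Rightarrow> int ^ 'd \<Rightarrow> (int ^ 'd) set" where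
  "box a b = {x. \<forall>i. a $ i \<le> x $ i \<and> x $ i \<le> b $ i}"

definition nn_edges :: "(int ^ 'd) set \<Rightarrow> (int ^ 'd) set set" where
  "nn_edges V = {{x, y} | x y. x \<in> V \<and> y \<in> V \<and> (\<Sum>i\<in>UNIV. \<bar>x $ i - y $ i\<bar>) = 1}"

definition edge_cfg :: "'v set set \<Rightarrow> ('v \<Rightarrow> real) \<Rightarrow> ('v set \<Rightarrow> real)" where
  "edge_cfg L eta = (\<lambda>e. if e \<in> L then (\<Prod>x\<in>e. eta x) else 0)"

definition configs :: "'v set \<Rightarrow> 'v set set \<Rightarrow> ('v set \<Rightarrow> real) set" where
  "configs V L = {edge_cfg L eta | eta. \<forall>x\<in>V. eta x = 1 \<or> eta x = -1}"

definition ham :: "'v set set \<Rightarrow> ('v set \<Rightarrow> real) \<Rightarrow> ('v set \<Rightarrow> real) \<Rightarrow> real" where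
  "ham L J eta = - (\<Sum>e\<in>L. J e * eta e)"

definition crit :: "('v set \<Rightarrow> real) set \<Rightarrow> 'v set set
    \<Rightarrow> (('v set \<Rightarrow> real) \<Rightarrow> ('v set \<Rightarrow> real) \<Rightarrow> real) \<Rightarrow> ('v set \<Rightarrow> real) set" where
  "crit S L E = {J. \<exists>eta\<in>S. \<exists>eta'\<in>S. eta \<noteq> eta' \<and> (\<Sum>e\<in>L. J e * (eta e - eta' e)) = E eta eta'}"

definition prec :: "'v set set \<Rightarrow> (('v set \<Rightarrow> real) \<Rightarrow> ('v set \<Rightarrow> real) \<Rightarrow> real)
    \<Rightarrow> ('v set \<Rightarrow> real) \<Rightarrow> ('v set \<Rightarrow> real) \<Rightarrow> ('v set \<Rightarrow> real) \<Rightarrow> bool" where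
  "prec L E J eta eta' \<longleftrightarrow> E eta eta' + ham L J eta - ham L J eta' < 0"

definition sigma :: "('v set \<Rightarrow> real) set \<Rightarrow> 'v set set
    \<Rightarrow> (('v set \<Rightarrow> real) \<Rightarrow> ('v set \<Rightarrow> real) \<Rightarrow> real)
    \<Rightarrow> ('v set \<Rightarrow> real) \<Rightarrow> 'v set \<Rightarrow> real \<Rightarrow> ('v set \<Rightarrow> real)" where
  "sigma S L E J b s = (THE eta. eta \<in> S \<and> eta b = s \<and>
      (\<forall>eta'\<in>S. eta' b = s \<and> eta' \<noteq> eta \<longrightarrow> prec L E J eta eta'))"

text \<open>Boundary of the critical droplet of b (meaningful for J outside the critical set).\<close>
definition droplet_bd :: "('v set \<Rightarrow> real) set \<Rightarrow> 'v set set
    \<Rightarrow> (('v set \<Rightarrow> real) \<Rightarrow> ('v set \<Rightarrow> real) \<Rightarrow> real)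
    \<Rightarrow> ('v set \<Rightarrow> real) \<Rightarrow> 'v set \<Rightarrow> 'v set set" where
  "droplet_bd S L E J b = {e \<in> L. sigma S L E J b 1 e \<noteq> sigma S L E J b (-1) e}"

definition flex0 :: "('v set \<Rightarrow> real) set \<Rightarrow> 'v set set
    \<Rightarrow> (('v set \<Rightarrow> real) \<Rightarrow> ('v set \<Rightarrow> real) \<Rightarrow> real)
    \<Rightarrow> ('v set \<Rightarrow> real) \<Rightarrow> 'v set \<Rightarrow> real" where
  "flex0 S L E J b = \<bar>- (\<Sum>e\<in>L. J e * (sigma S L E J b 1 e - sigma S L E J b (-1) e))
                      + E (sigma S L E J b 1) (sigma S L E J b (-1))\<bar>"

definition cont_R :: "'v set set \<Rightarrow> (('v set \<Rightarrow> real) \<Rightarrow> real) \<Rightarrow> bool" where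
  "cont_R L F \<longleftrightarrow> (\<forall>J. \<forall>\<epsilon>>0. \<exists>\<delta>>0. \<forall>J'. (\<forall>e\<in>L. \<bar>J' e - J e\<bar> < \<delta>) \<longrightarrow> \<bar>F J' - F J\<bar> < \<epsilon>)"

definition flex :: "('v set \<Rightarrow> real) set \<Rightarrow> 'v set set
    \<Rightarrow> (('v set \<Rightarrow> real) \<Rightarrow> ('v set \<Rightarrow> real) \<Rightarrow> real)
    \<Rightarrow> 'v set \<Rightarrow> ('v set \<Rightarrow> real) \<Rightarrow> real" where
  "flex S L E b = (THE F. cont_R L F \<and> (\<forall>J. J \<notin> crit S L E \<longrightarrow> F J = flex0 S L E J b))"

definition curve :: "('v set \<Rightarrow> real) \<Rightarrow> ('v set \<Rightarrow> real) \<Rightarrow> real \<Rightarrow> ('v set \<Rightarrow> real)" where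
  "curve J J' s = (\<lambda>e. exp (- s) * J e + sqrt (1 - exp (- 2 * s)) * J' e)"

end

theory Submission
  imports Defs "HOL-Computational_Algebra.Polynomial"
begin

(* Fix a configuration base and put energy J eta = H_J(eta) + E(eta, base).  By the cocycle
   property, sigma^{+-,b}(J) minimises this energy over the configurations with eta_b = +-1, so
   off the critical set F_b(J) is the absolute difference of the two constrained minima.  That
   expression is Lipschitz in J, and non-critical couplings are dense, so it is F_b everywhere.

   Along the curve only finitely many times are critical: each tie equation becomes a polynomial
   equation in exp (-s).  Between two critical times the two minimisers cannot change, since
   energies can only swap order through a tie; hence there F_b moves by at most
   2 |dD_b| max_e |J_e(v) - J_e(u)|, and |J_e(v) - J_e(u)| is at most max_e (|J_e| v |J'_e|) times
   the increment of sqrt (1 - exp (-2s)) - exp (-s).  Summing over the pieces and using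
   sqrt (1 - exp (-2t)) + 1 - exp (-t) <= 3 sqrt t gives the claim. *)

lemma Min_image_diff_abs_le:
  fixes f g :: "'a \<Rightarrow> real"
  assumes "finite X" "X \<noteq> {}" "\<And>x. x \<in> X \<Longrightarrow> \<bar>f x - g x\<bar> \<le> c"
  shows "\<bar>Min (f ` X) - Min (g ` X)\<bar> \<le> c"
proof -
  have "Min (f ` X) \<in> f ` X" "Min (g ` X) \<in> g ` X"
    using assms(1,2) by (intro Min_in; simp)+
  then obtain x1 x2 where x1: "x1 \<in> X" "Min (f ` X) = f x1"
    and x2: "x2 \<in> X" "Min (g ` X) = g x2" by auto
  have "f x1 \<le> f x2" "g x2 \<le> g x1"
    using x1 x2 assms(1) by (metis Min_le finite_imageI image_eqI)+
  with assms(3)[OF x1(1)] assms(3)[OF x2(1)] show ?thesis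
    unfolding x1(2) x2(2) by linarith
qed

lemma cont_R_if_lipschitz:
  assumes "finite L" and lip: "\<And>J J'. \<bar>F J - F J'\<bar> \<le> K * (\<Sum>e\<in>L. \<bar>J e - J' e\<bar>)"
  shows "cont_R L F"
  unfolding cont_R_def
proof (intro allI impI)
  fix J :: "'a set \<Rightarrow> real" and \<epsilon> :: real
  assume "\<epsilon> > 0"
  define \<delta> where "\<delta> = \<epsilon> / (\<bar>K\<bar> * real (card L) + 1)"
  have "\<delta> > 0" using \<open>\<epsilon> > 0\<close> unfolding \<delta>_def by (simp add: add_nonneg_pos)
  moreover have "\<bar>F J' - F J\<bar> < \<epsilon>" if close: "\<forall>e\<in>L. \<bar>J' e - J e\<bar> < \<delta>" for J'
  proof -
    have "(\<Sum>e\<in>L. \<bar>J' e - J e\<bar>) \<le> real (card L) * \<delta>"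
      using sum_bounded_above[of L "\<lambda>e. \<bar>J' e - J e\<bar>" \<delta>] close by fastforce
    then have "K * (\<Sum>e\<in>L. \<bar>J' e - J e\<bar>) \<le> \<bar>K\<bar> * (real (card L) * \<delta>)"
      by (meson abs_ge_self abs_ge_zero mult_mono order_trans sum_nonneg)
    then have "\<bar>F J' - F J\<bar> \<le> \<bar>K\<bar> * (real (card L) * \<delta>)"
      using lip[of J' J] by linarith
    also have "\<dots> = \<epsilon> * (\<bar>K\<bar> * real (card L) / (\<bar>K\<bar> * real (card L) + 1))"
      unfolding \<delta>_def by simp
    also have "\<dots> < \<epsilon>"
      using \<open>\<epsilon> > 0\<close> by (simp add: pos_divide_less_eq add_nonneg_pos)
    finally show ?thesis .
  qed
  ultimately show "\<exists>\<delta>>0. \<forall>J'. (\<forall>e\<in>L. \<bar>J' e - J e\<bar> < \<delta>) \<longrightarrow> \<bar>F J' - F J\<bar> < \<epsilon>"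
    by blast
qed

lemma cont_R_eq_if_eq_on_dense:
  assumes F: "cont_R L F" and G: "cont_R L G"
    and dense: "\<And>J \<delta>. \<delta> > 0 \<Longrightarrow> \<exists>J'\<in>D. \<forall>e\<in>L. \<bar>J' e - J e\<bar> < \<delta>"
    and eq: "\<And>J. J \<in> D \<Longrightarrow> F J = G J"
  shows "F = G"
proof
  fix J
  show "F J = G J"
  proof (rule ccontr)
    assume "F J \<noteq> G J"
    define \<epsilon> where "\<epsilon> = \<bar>F J - G J\<bar> / 2"
    have "\<epsilon> > 0" using \<open>F J \<noteq> G J\<close> unfolding \<epsilon>_def by simp
    obtain d1 where "d1 > 0" and d1: "\<And>J'. \<forall>e\<in>L. \<bar>J' e - J e\<bar> < d1 \<Longrightarrow> \<bar>F J' - F J\<bar> < \<epsilon>"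
      using F \<open>\<epsilon> > 0\<close> unfolding cont_R_def by blast
    obtain d2 where "d2 > 0" and d2: "\<And>J'. \<forall>e\<in>L. \<bar>J' e - J e\<bar> < d2 \<Longrightarrow> \<bar>G J' - G J\<bar> < \<epsilon>"
      using G \<open>\<epsilon> > 0\<close> unfolding cont_R_def by blast
    obtain J' where "J' \<in> D" and close: "\<forall>e\<in>L. \<bar>J' e - J e\<bar> < min d1 d2"
      using dense[of "min d1 d2" J] \<open>d1 > 0\<close> \<open>d2 > 0\<close> by auto
    have "\<bar>F J' - F J\<bar> < \<epsilon>" "\<bar>G J' - G J\<bar> < \<epsilon>"
      using close by (auto intro: d1 d2)
    moreover have "\<bar>F J - G J\<bar> \<le> \<bar>F J' - F J\<bar> + \<bar>G J' - G J\<bar>"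
      using abs_triangle_ineq[of "F J - F J'" "G J' - G J"] eq[OF \<open>J' \<in> D\<close>]
      by (simp add: abs_minus_commute)
    ultimately have "\<bar>F J - G J\<bar> < 2 * \<epsilon>" by linarith
    then show False unfolding \<epsilon>_def by simp
  qed
qed

lemma nonneg_if_no_interior_zero:
  fixes h :: "real \<Rightarrow> real"
  assumes cont: "continuous_on {u..v} h" and s0: "s0 \<in> {u<..<v}" "0 < h s0"
    and no_zero: "\<And>s. s \<in> {u<..<v} \<Longrightarrow> h s \<noteq> 0" and w: "w \<in> {u..v}"
  shows "0 \<le> h w"
proof -
  have interior: "0 \<le> h x" if x: "x \<in> {u<..<v}" for x
  proof (rule ccontr)
    assume "\<not> 0 \<le> h x"
    then have "0 \<in> closed_segment (h x) (h s0)"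
      using s0(2) by (simp add: closed_segment_eq_real_ivl)
    moreover have seg: "closed_segment x s0 \<subseteq> {u<..<v}"
      using x s0(1) by (auto simp: closed_segment_eq_real_ivl)
    moreover have "continuous_on (closed_segment x s0) h"
      using seg by (meson cont continuous_on_subset greaterThanLessThan_subseteq_atLeastAtMost_iff
          order_refl order_trans)
    ultimately obtain y where "y \<in> {u<..<v}" "h y = 0"
      using IVT'_closed_segment_real by blast
    then show False using no_zero by blast
  qed
  have "closure {u<..<v} = {u..v}"
    using s0(1) by (intro closure_greaterThanLessThan) simp
  then show ?thesis
    using continuous_ge_on_closure[of "{u<..<v}" h w 0] cont w interior by simp
qed

lemma abs_diff_le_if_finite_exceptions:
  fixes f g :: "real \<Rightarrow> real"
  assumes "finite Z" "a \<le> b"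
    and step: "\<And>u v. a \<le> u \<Longrightarrow> u < v \<Longrightarrow> v \<le> b \<Longrightarrow> Z \<inter> {u<..<v} = {} \<Longrightarrow>
                 \<bar>f v - f u\<bar> \<le> g v - g u"
  shows "\<bar>f b - f a\<bar> \<le> g b - g a"
proof -
  have "\<bar>f v - f u\<bar> \<le> g v - g u" if "a \<le> u" "u \<le> v" "v \<le> b" for u v
    using that
  proof (induction "card (Z \<inter> {u<..<v})" arbitrary: u v rule: less_induct)
    case less
    show ?case
    proof (cases "Z \<inter> {u<..<v} = {}")
      case True
      then show ?thesis using less.prems step by (cases "u = v") auto
    next
      case False
      then obtain c where c: "c \<in> Z" "u < c" "c < v" by auto
      have "finite (Z \<inter> {u<..<v})" using assms(1) by simp
      then have "card (Z \<inter> {u<..<c}) < card (Z \<inter> {u<..<v})"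
        and "card (Z \<inter> {c<..<v}) < card (Z \<inter> {u<..<v})"
        using c by (auto intro!: psubset_card_mono)
      then have "\<bar>f c - f u\<bar> \<le> g c - g u" "\<bar>f v - f c\<bar> \<le> g v - g c"
        using less c by auto
      moreover have "\<bar>f v - f u\<bar> \<le> \<bar>f c - f u\<bar> + \<bar>f v - f c\<bar>"
        using abs_triangle_ineq[of "f c - f u" "f v - f c"] by simp
      ultimately show ?thesis by linarith
    qed
  qed
  then show ?thesis using assms(2) by simp
qed

lemma finite_curve_level_set:
  fixes A B C :: real
  assumes "\<not> (A = 0 \<and> B = 0 \<and> C = 0)"
  shows "finite {s. 0 \<le> s \<and> exp (- s) * A + sqrt (1 - exp (- 2 * s)) * B = C}"
proof -
  define q where "q = [:C\<^sup>2 - B\<^sup>2, - 2 * A * C, A\<^sup>2 + B\<^sup>2:]"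
  have "q \<noteq> 0"
  proof
    assume "q = 0"
    then have "C\<^sup>2 = B\<^sup>2" "A\<^sup>2 + B\<^sup>2 = 0" unfolding q_def by auto
    then show False using assms by (simp add: add_nonneg_eq_0_iff)
  qed
  have "{s. 0 \<le> s \<and> exp (- s) * A + sqrt (1 - exp (- 2 * s)) * B = C}
      \<subseteq> (\<lambda>s. exp (- s)) -` {x. poly q x = 0}"
  proof
    fix s :: real
    assume "s \<in> {s. 0 \<le> s \<and> exp (- s) * A + sqrt (1 - exp (- 2 * s)) * B = C}"
    then have s: "0 \<le> s" "exp (- s) * A + sqrt (1 - exp (- 2 * s)) * B = C" by auto
    define x where "x = exp (- s)"
    have "exp (- 2 * s) = x\<^sup>2" unfolding x_def by (simp add: power2_eq_square flip: exp_add)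
    moreover have "x\<^sup>2 \<le> 1" unfolding x_def using s(1) by (simp add: power_le_one)
    ultimately have "(sqrt (1 - exp (- 2 * s)))\<^sup>2 = 1 - x\<^sup>2" by simp
    moreover have "sqrt (1 - exp (- 2 * s)) * B = C - A * x"
      using s(2) unfolding x_def by (metis add_diff_cancel_left' mult.commute)
    ultimately have "(1 - x\<^sup>2) * B\<^sup>2 = (C - A * x)\<^sup>2" by (metis power_mult_distrib)
    then have "poly q x = 0" unfolding q_def by (simp add: algebra_simps power2_eq_square)
    then show "s \<in> (\<lambda>s. exp (- s)) -` {x. poly q x = 0}" unfolding x_def by simp
  qed
  moreover have "finite ((\<lambda>s::real. exp (- s)) -` {x. poly q x = 0})"
    using poly_roots_finite[OF \<open>q \<noteq> 0\<close>] by (rule finite_vimageI) (simp add: inj_on_def)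
  ultimately show ?thesis by (rule finite_subset)
qed

definition curve_variation :: "real \<Rightarrow> real" where
  "curve_variation s = sqrt (1 - exp (- 2 * s)) - exp (- s)"

lemma curve_variation_mono: "u \<le> v \<Longrightarrow> curve_variation u \<le> curve_variation v"
  unfolding curve_variation_def by (intro diff_mono real_sqrt_le_mono) auto

lemma curve_increment_le:
  assumes "u \<le> v" "\<bar>J e\<bar> \<le> M" "\<bar>J' e\<bar> \<le> M"
  shows "\<bar>curve J J' v e - curve J J' u e\<bar> \<le> M * (curve_variation v - curve_variation u)"
proof -
  have exp_dec: "0 \<le> exp (- u) - exp (- v)"
    and sqrt_inc: "0 \<le> sqrt (1 - exp (- 2 * v)) - sqrt (1 - exp (- 2 * u))"
    using assms(1) by auto
  have "curve J J' v e - curve J J' u e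
      = (sqrt (1 - exp (- 2 * v)) - sqrt (1 - exp (- 2 * u))) * J' e - (exp (- u) - exp (- v)) * J e"
    unfolding curve_def by (simp add: algebra_simps)
  also have "\<bar>\<dots>\<bar> \<le> (sqrt (1 - exp (- 2 * v)) - sqrt (1 - exp (- 2 * u))) * \<bar>J' e\<bar>
      + (exp (- u) - exp (- v)) * \<bar>J e\<bar>"
    using exp_dec sqrt_inc by (intro order_trans[OF abs_triangle_ineq4]) (simp add: abs_mult)
  also have "\<dots> \<le> (sqrt (1 - exp (- 2 * v)) - sqrt (1 - exp (- 2 * u))) * M
      + (exp (- u) - exp (- v)) * M"
    using assms(2,3) exp_dec sqrt_inc by (intro add_mono mult_left_mono)
  also have "\<dots> = M * (curve_variation v - curve_variation u)"
    unfolding curve_variation_def by (simp add: algebra_simps)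
  finally show ?thesis .
qed

lemma curve_variation_le_sqrt:
  assumes "0 \<le> t" "t \<le> 1"
  shows "curve_variation t - curve_variation 0 \<le> 3 * sqrt t"
proof -
  have "1 - exp (- t) \<le> t" using exp_ge_add_one_self[of "- t"] by simp
  also have "t \<le> sqrt t" using assms by (simp add: real_le_rsqrt power2_eq_square mult_left_le)
  finally have exp_part: "1 - exp (- t) \<le> sqrt t" .
  have "1 - exp (- 2 * t) \<le> 4 * t" using exp_ge_add_one_self[of "- 2 * t"] assms by simp
  then have "sqrt (1 - exp (- 2 * t)) \<le> 2 * sqrt t"
    using real_sqrt_le_mono by (fastforce simp: real_sqrt_mult)
  with exp_part show ?thesis unfolding curve_variation_def by simp
qed

locale spin_system =
  fixes S :: "('v set \<Rightarrow> real) set" and L :: "'v set set"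
    and E :: "('v set \<Rightarrow> real) \<Rightarrow> ('v set \<Rightarrow> real) \<Rightarrow> real" and b :: "'v set"
  assumes finite_L: "finite L" and finite_S: "finite S"
    and vanish_off_L: "\<And>\<eta> e. \<eta> \<in> S \<Longrightarrow> e \<notin> L \<Longrightarrow> \<eta> e = 0"
    and spin_on_L: "\<And>\<eta> e. \<eta> \<in> S \<Longrightarrow> e \<in> L \<Longrightarrow> \<eta> e = 1 \<or> \<eta> e = -1"
    and E_cocycle: "\<And>\<eta> \<eta>' \<eta>''. \<eta> \<in> S \<Longrightarrow> \<eta>' \<in> S \<Longrightarrow> \<eta>'' \<in> S \<Longrightarrow>
                     E \<eta> \<eta>'' = E \<eta> \<eta>' + E \<eta>' \<eta>''"
    and plus_config: "\<exists>\<eta>\<in>S. \<eta> b = 1" and minus_config: "\<exists>\<eta>\<in>S. \<eta> b = -1"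
begin

definition base :: "'v set \<Rightarrow> real" where "base = (SOME \<eta>. \<eta> \<in> S)"

lemma base_in_S: "base \<in> S"
  using plus_config unfolding base_def by (auto simp: some_in_eq)

text \<open>The energy is H_J(\<eta>) + E(\<eta>, base); by the cocycle property,
  E(\<eta>, \<eta>') + H_J(\<eta>) - H_J(\<eta>') is the energy difference of \<eta> and \<eta>'.\<close>
definition energy :: "('v set \<Rightarrow> real) \<Rightarrow> ('v set \<Rightarrow> real) \<Rightarrow> real" where
  "energy J \<eta> = E \<eta> base - (\<Sum>e\<in>L. J e * \<eta> e)"

definition sector :: "real \<Rightarrow> ('v set \<Rightarrow> real) set" where
  "sector s = {\<eta> \<in> S. \<eta> b = s}"

definition ground :: "real \<Rightarrow> ('v set \<Rightarrow> real) \<Rightarrow> real" where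
  "ground s J = Min (energy J ` sector s)"

definition gap :: "('v set \<Rightarrow> real) \<Rightarrow> real" where
  "gap J = \<bar>ground 1 J - ground (-1) J\<bar>"

lemma energy_diff:
  assumes "\<eta> \<in> S" "\<eta>' \<in> S"
  shows "energy J \<eta> - energy J \<eta>' = E \<eta> \<eta>' - (\<Sum>e\<in>L. J e * (\<eta> e - \<eta>' e))"
  using E_cocycle[OF assms base_in_S] unfolding energy_def
  by (simp add: right_diff_distrib sum_subtractf)

lemma prec_iff_energy_less:
  assumes "\<eta> \<in> S" "\<eta>' \<in> S"
  shows "prec L E J \<eta> \<eta>' \<longleftrightarrow> energy J \<eta> < energy J \<eta>'"
proof -
  have "E \<eta> \<eta>' + ham L J \<eta> - ham L J \<eta>' = energy J \<eta> - energy J \<eta>'"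
    using energy_diff[OF assms, of J] unfolding ham_def by (simp add: right_diff_distrib sum_subtractf)
  then show ?thesis unfolding prec_def by simp
qed

lemma crit_iff_energy_tie:
  "J \<in> crit S L E \<longleftrightarrow> (\<exists>\<eta>\<in>S. \<exists>\<eta>'\<in>S. \<eta> \<noteq> \<eta>' \<and> energy J \<eta> = energy J \<eta>')"
proof -
  have "(\<Sum>e\<in>L. J e * (\<eta> e - \<eta>' e)) = E \<eta> \<eta>' \<longleftrightarrow> energy J \<eta> = energy J \<eta>'"
    if "\<eta> \<in> S" "\<eta>' \<in> S" for \<eta> \<eta>'
    using energy_diff[OF that, of J] by linarith
  then show ?thesis unfolding crit_def by blast
qed

lemma finite_sector: "finite (sector s)"
  unfolding sector_def using finite_S by simp

lemma sector_nonempty: "s = 1 \<or> s = -1 \<Longrightarrow> sector s \<noteq> {}"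
  unfolding sector_def using plus_config minus_config by auto

lemma sigma_minimizer:
  assumes "J \<notin> crit S L E" "s = 1 \<or> s = -1"
  shows "sigma S L E J b s \<in> sector s" and "energy J (sigma S L E J b s) = ground s J"
    and "\<And>\<eta>. \<eta> \<in> sector s \<Longrightarrow> \<eta> \<noteq> sigma S L E J b s \<Longrightarrow>
           energy J (sigma S L E J b s) < energy J \<eta>"
proof -
  have "ground s J \<in> energy J ` sector s"
    unfolding ground_def using finite_sector sector_nonempty[OF assms(2)] by (intro Min_in) auto
  then obtain \<sigma> where \<sigma>: "\<sigma> \<in> sector s" "energy J \<sigma> = ground s J" by auto
  have less: "energy J \<sigma> < energy J \<eta>" if "\<eta> \<in> sector s" "\<eta> \<noteq> \<sigma>" for \<eta>
  proof -
    have "\<sigma> \<in> S" "\<eta> \<in> S" using that(1) \<sigma>(1) by (simp_all add: sector_def)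
    then have "energy J \<sigma> \<noteq> energy J \<eta>"
      using assms(1) that(2) unfolding crit_iff_energy_tie by metis
    moreover have "ground s J \<le> energy J \<eta>"
      unfolding ground_def using finite_sector that(1) by (intro Min_le) auto
    ultimately show ?thesis using \<sigma>(2) by simp
  qed
  have sigma_eq: "sigma S L E J b s = \<sigma>"
    unfolding sigma_def
  proof (rule the_equality)
    show "\<sigma> \<in> S \<and> \<sigma> b = s \<and> (\<forall>\<eta>'\<in>S. \<eta>' b = s \<and> \<eta>' \<noteq> \<sigma> \<longrightarrow> prec L E J \<sigma> \<eta>')"
      using \<sigma>(1) less prec_iff_energy_less unfolding sector_def by auto
  next
    fix \<eta> assume \<eta>: "\<eta> \<in> S \<and> \<eta> b = s \<and> (\<forall>\<eta>'\<in>S. \<eta>' b = s \<and> \<eta>' \<noteq> \<eta> \<longrightarrow> prec L E J \<eta> \<eta>')"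
    show "\<eta> = \<sigma>"
    proof (rule ccontr)
      assume "\<eta> \<noteq> \<sigma>"
      then have "prec L E J \<eta> \<sigma>" using \<eta> \<sigma>(1) unfolding sector_def by auto
      then have "energy J \<eta> < energy J \<sigma>"
        using prec_iff_energy_less \<eta> \<sigma>(1) unfolding sector_def by auto
      moreover have "energy J \<sigma> < energy J \<eta>"
        using less \<eta> \<open>\<eta> \<noteq> \<sigma>\<close> unfolding sector_def by auto
      ultimately show False by simp
    qed
  qed
  show "sigma S L E J b s \<in> sector s" using sigma_eq \<sigma>(1) by simp
  show "energy J (sigma S L E J b s) = ground s J" using sigma_eq \<sigma>(2) by simp
  show "\<And>\<eta>. \<eta> \<in> sector s \<Longrightarrow> \<eta> \<noteq> sigma S L E J b s \<Longrightarrow>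
      energy J (sigma S L E J b s) < energy J \<eta>"
    using sigma_eq less by simp
qed

lemma flex0_eq_gap:
  assumes "J \<notin> crit S L E"
  shows "flex0 S L E J b = gap J"
  using energy_diff[of "sigma S L E J b 1" "sigma S L E J b (-1)" J]
    sigma_minimizer(1,2)[OF assms, of 1] sigma_minimizer(1,2)[OF assms, of "-1"]
  unfolding flex0_def gap_def sector_def by simp

lemma energy_lipschitz:
  assumes "\<eta> \<in> S"
  shows "\<bar>energy J \<eta> - energy J' \<eta>\<bar> \<le> (\<Sum>e\<in>L. \<bar>J e - J' e\<bar>)"
proof -
  have "energy J \<eta> - energy J' \<eta> = (\<Sum>e\<in>L. (J' e - J e) * \<eta> e)"
    unfolding energy_def by (simp add: left_diff_distrib sum_subtractf)
  also have "\<bar>\<dots>\<bar> \<le> (\<Sum>e\<in>L. \<bar>(J' e - J e) * \<eta> e\<bar>)" by (rule sum_abs)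
  also have "\<dots> = (\<Sum>e\<in>L. \<bar>J e - J' e\<bar>)"
  proof (intro sum.cong refl)
    fix e assume "e \<in> L"
    then have "\<bar>\<eta> e\<bar> = 1" using spin_on_L[OF assms] by fastforce
    then show "\<bar>(J' e - J e) * \<eta> e\<bar> = \<bar>J e - J' e\<bar>" by (simp add: abs_mult abs_minus_commute)
  qed
  finally show ?thesis .
qed

lemma gap_lipschitz: "\<bar>gap J - gap J'\<bar> \<le> 2 * (\<Sum>e\<in>L. \<bar>J e - J' e\<bar>)"
proof -
  have "\<bar>ground s J - ground s J'\<bar> \<le> (\<Sum>e\<in>L. \<bar>J e - J' e\<bar>)" if "s = 1 \<or> s = -1" for s
    unfolding ground_def using finite_sector sector_nonempty[OF that] energy_lipschitz
    by (intro Min_image_diff_abs_le) (auto simp: sector_def)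
  from this[of 1] this[of "-1"] show ?thesis unfolding gap_def by linarith
qed

lemma gap_cont: "cont_R L gap"
  using cont_R_if_lipschitz[OF finite_L gap_lipschitz] .

lemma finite_crit_perturbations:
  assumes inj: "inj_on k L" and pos: "\<And>e. e \<in> L \<Longrightarrow> 0 < k e"
  shows "finite {x. (\<lambda>e. J e + x ^ k e) \<in> crit S L E}"
proof -
  define p where "p \<eta> \<eta>' = [:(\<Sum>e\<in>L. J e * (\<eta> e - \<eta>' e)) - E \<eta> \<eta>':]
      + (\<Sum>e\<in>L. monom (\<eta> e - \<eta>' e) (k e))" for \<eta> \<eta>'
  have poly_p: "poly (p \<eta> \<eta>') x = (\<Sum>e\<in>L. (J e + x ^ k e) * (\<eta> e - \<eta>' e)) - E \<eta> \<eta>'" for \<eta> \<eta>' x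
    unfolding p_def by (simp add: poly_sum poly_monom algebra_simps flip: sum.distrib)
  have p_nonzero: "p \<eta> \<eta>' \<noteq> 0" if configs: "\<eta> \<in> S" "\<eta>' \<in> S" and "\<eta> \<noteq> \<eta>'" for \<eta> \<eta>'
  proof
    assume "p \<eta> \<eta>' = 0"
    obtain e0 where e0: "\<eta> e0 \<noteq> \<eta>' e0" using \<open>\<eta> \<noteq> \<eta>'\<close> by auto
    then have "e0 \<in> L" using vanish_off_L configs by metis
    have "coeff (p \<eta> \<eta>') (k e0) = (\<Sum>e\<in>L. if k e = k e0 then \<eta> e - \<eta>' e else 0)"
      using pos[OF \<open>e0 \<in> L\<close>] unfolding p_def by (simp add: coeff_sum coeff_pCons')
    also have "\<dots> = (\<Sum>e\<in>L. if e = e0 then \<eta> e - \<eta>' e else 0)"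
      using inj \<open>e0 \<in> L\<close> by (intro sum.cong) (auto simp: inj_on_def)
    also have "\<dots> = \<eta> e0 - \<eta>' e0" using \<open>e0 \<in> L\<close> finite_L by simp
    finally show False using \<open>p \<eta> \<eta>' = 0\<close> e0 by simp
  qed
  have "{x. (\<lambda>e. J e + x ^ k e) \<in> crit S L E}
      \<subseteq> (\<Union>\<eta>\<in>S. \<Union>\<eta>'\<in>S - {\<eta>}. {x. poly (p \<eta> \<eta>') x = 0})"
    unfolding crit_def poly_p by auto
  moreover have "finite (\<Union>\<eta>\<in>S. \<Union>\<eta>'\<in>S - {\<eta>}. {x. poly (p \<eta> \<eta>') x = 0})"
    by (intro finite_UN_I finite_Diff finite_S poly_roots_finite p_nonzero) auto
  ultimately show ?thesis by (rule finite_subset)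
qed

lemma noncrit_dense:
  assumes "\<delta> > 0"
  shows "\<exists>J'\<in>- crit S L E. \<forall>e\<in>L. \<bar>J' e - J e\<bar> < \<delta>"
proof -
  obtain h where "bij_betw h L {0..<card L}" using ex_bij_betw_finite_nat[OF finite_L] by blast
  then have inj: "inj_on (\<lambda>e. Suc (h e)) L" by (auto simp: bij_betw_def inj_on_def)
  have "infinite ({0<..<min \<delta> 1} - {x. (\<lambda>e. J e + x ^ Suc (h e)) \<in> crit S L E})"
    using finite_crit_perturbations[OF inj] assms by (simp add: Diff_infinite_finite)
  then obtain x where "x \<in> {0<..<min \<delta> 1}" "(\<lambda>e. J e + x ^ Suc (h e)) \<notin> crit S L E"
    by (blast dest: infinite_imp_nonempty)
  then have x: "0 < x" "x < \<delta>" "x < 1" "(\<lambda>e. J e + x ^ Suc (h e)) \<notin> crit S L E" by auto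
  have "\<bar>x ^ Suc (h e)\<bar> < \<delta>" for e
  proof -
    have "\<bar>x ^ Suc (h e)\<bar> = x * x ^ h e" using x(1) by (simp add: abs_mult)
    moreover have "x * x ^ h e \<le> x" using x(1,3) by (simp add: mult_left_le power_le_one)
    ultimately show ?thesis using x(2) by linarith
  qed
  with x(4) show ?thesis by (intro bexI[of _ "\<lambda>e. J e + x ^ Suc (h e)"]) auto
qed

lemma flex_eq_gap: "flex S L E b = gap"
  unfolding flex_def
proof (rule the_equality)
  show "cont_R L gap \<and> (\<forall>J. J \<notin> crit S L E \<longrightarrow> gap J = flex0 S L E J b)"
    using gap_cont flex0_eq_gap by simp
next
  fix F assume "cont_R L F \<and> (\<forall>J. J \<notin> crit S L E \<longrightarrow> F J = flex0 S L E J b)"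
  then show "F = gap"
    using cont_R_eq_if_eq_on_dense[OF _ gap_cont noncrit_dense, of F] flex0_eq_gap by simp
qed

lemma curve_pairing:
  "(\<Sum>e\<in>L. curve J J' s e * \<eta> e)
     = exp (- s) * (\<Sum>e\<in>L. J e * \<eta> e) + sqrt (1 - exp (- 2 * s)) * (\<Sum>e\<in>L. J' e * \<eta> e)"
  unfolding curve_def by (simp add: distrib_right sum.distrib sum_distrib_left mult.assoc)

lemma finite_crit_times:
  assumes "0 \<le> s0" "curve J J' s0 \<notin> crit S L E"
  shows "finite {s. 0 \<le> s \<and> curve J J' s \<in> crit S L E}"
proof -
  let ?A = "\<lambda>K \<eta> \<eta>'. \<Sum>e\<in>L. K e * (\<eta> e - \<eta>' e)"
  let ?Z = "\<lambda>\<eta> \<eta>'. {s. 0 \<le> s \<and>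
    exp (- s) * ?A J \<eta> \<eta>' + sqrt (1 - exp (- 2 * s)) * ?A J' \<eta> \<eta>' = E \<eta> \<eta>'}"
  have "{s. 0 \<le> s \<and> curve J J' s \<in> crit S L E} \<subseteq> (\<Union>\<eta>\<in>S. \<Union>\<eta>'\<in>S - {\<eta>}. ?Z \<eta> \<eta>')"
    by (auto simp: crit_def curve_pairing)
  moreover have finite_Z: "finite (?Z \<eta> \<eta>')" if "\<eta> \<in> S" "\<eta>' \<in> S" "\<eta> \<noteq> \<eta>'" for \<eta> \<eta>'
  proof (rule finite_curve_level_set, rule notI)
    assume "?A J \<eta> \<eta>' = 0 \<and> ?A J' \<eta> \<eta>' = 0 \<and> E \<eta> \<eta>' = 0"
    then have "(\<Sum>e\<in>L. curve J J' s0 e * (\<eta> e - \<eta>' e)) = E \<eta> \<eta>'"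
      by (simp add: curve_pairing)
    then have "curve J J' s0 \<in> crit S L E" unfolding crit_def using that by blast
    with assms(2) show False ..
  qed
  then have "finite (\<Union>\<eta>\<in>S. \<Union>\<eta>'\<in>S - {\<eta>}. ?Z \<eta> \<eta>')"
    by (intro finite_UN_I finite_Diff finite_S finite_Z) auto
  ultimately show ?thesis by (rule finite_subset)
qed

lemma ground_along_noncrit_interval:
  assumes noncrit: "\<forall>s\<in>{u<..<v}. curve J J' s \<notin> crit S L E" and s0: "s0 \<in> {u<..<v}"
    and sg: "sg = 1 \<or> sg = -1" and w: "w \<in> {u..v}"
  shows "ground sg (curve J J' w) = energy (curve J J' w) (sigma S L E (curve J J' s0) b sg)"
proof -
  let ?\<sigma> = "sigma S L E (curve J J' s0) b sg"
  have \<sigma>: "?\<sigma> \<in> sector sg" "\<And>\<eta>. \<eta> \<in> sector sg \<Longrightarrow> \<eta> \<noteq> ?\<sigma> \<Longrightarrow>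
      energy (curve J J' s0) ?\<sigma> < energy (curve J J' s0) \<eta>"
    using sigma_minimizer(1,3)[OF _ sg] noncrit s0 by auto
  \<comment> \<open>two energies can only change order along the curve by passing through a tie\<close>
  have "energy (curve J J' w) ?\<sigma> \<le> energy (curve J J' w) \<eta>" if \<eta>: "\<eta> \<in> sector sg" "\<eta> \<noteq> ?\<sigma>" for \<eta>
  proof -
    let ?h = "\<lambda>s. energy (curve J J' s) \<eta> - energy (curve J J' s) ?\<sigma>"
    have "continuous_on {u..v} ?h"
      unfolding energy_def curve_def by (intro continuous_intros)
    moreover have "0 < ?h s0" using \<sigma>(2)[OF \<eta>] by simp
    moreover have "?h s \<noteq> 0" if "s \<in> {u<..<v}" for s
    proof
      assume "?h s = 0"
      moreover have "\<eta> \<in> S" "?\<sigma> \<in> S" using \<eta>(1) \<sigma>(1) by (simp_all add: sector_def)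
      ultimately have "curve J J' s \<in> crit S L E"
        using \<eta>(2) unfolding crit_iff_energy_tie by force
      with noncrit that show False by blast
    qed
    ultimately show ?thesis using nonneg_if_no_interior_zero[OF _ s0 _ _ w, of ?h] by simp
  qed
  then show ?thesis
    unfolding ground_def using finite_sector \<sigma>(1) by (intro Min_eqI) auto
qed

lemma energy_gap_change_le:
  assumes "p \<in> S" "q \<in> S" and close: "\<forall>e\<in>L. \<bar>J1 e - J2 e\<bar> \<le> K"
  shows "\<bar>(energy J2 p - energy J2 q) - (energy J1 p - energy J1 q)\<bar>
           \<le> 2 * K * real (card {e \<in> L. p e \<noteq> q e})"
proof -
  let ?D = "{e \<in> L. p e \<noteq> q e}"
  have "(energy J2 p - energy J2 q) - (energy J1 p - energy J1 q) = (\<Sum>e\<in>L. (J1 e - J2 e) * (p e - q e))"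
    unfolding energy_def by (simp add: algebra_simps sum.distrib sum_subtractf)
  also have "\<dots> = (\<Sum>e\<in>?D. (J1 e - J2 e) * (p e - q e))"
    using finite_L by (intro sum.mono_neutral_right) auto
  also have "\<bar>\<dots>\<bar> \<le> (\<Sum>e\<in>?D. \<bar>J1 e - J2 e\<bar> * \<bar>p e - q e\<bar>)"
    unfolding abs_mult[symmetric] by (rule sum_abs)
  also have "\<dots> \<le> (\<Sum>e\<in>?D. K * 2)"
  proof (rule sum_mono)
    fix e assume "e \<in> ?D"
    then have "p e = 1 \<or> p e = -1" "q e = 1 \<or> q e = -1" using spin_on_L assms(1,2) by simp_all
    then have "\<bar>p e - q e\<bar> \<le> 2" by auto
    then show "\<bar>J1 e - J2 e\<bar> * \<bar>p e - q e\<bar> \<le> K * 2"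
      using close \<open>e \<in> ?D\<close> by (intro mult_mono) auto
  qed
  finally show ?thesis by (simp add: mult.commute)
qed

lemma gap_curve_increment:
  assumes "u < v" and noncrit: "\<forall>s\<in>{u<..<v}. curve J J' s \<notin> crit S L E"
    and s0: "s0 \<in> {u<..<v}" and bound: "\<forall>e\<in>L. \<bar>J e\<bar> \<le> M \<and> \<bar>J' e\<bar> \<le> M"
  shows "\<bar>gap (curve J J' v) - gap (curve J J' u)\<bar>
           \<le> 2 * (M * (curve_variation v - curve_variation u))
               * real (card (droplet_bd S L E (curve J J' s0) b))"
proof -
  let ?p = "sigma S L E (curve J J' s0) b 1" and ?q = "sigma S L E (curve J J' s0) b (-1)"
  have "?p \<in> S" "?q \<in> S"
    using sigma_minimizer(1) noncrit s0 by (auto simp: sector_def)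
  have gap_eq: "gap (curve J J' w) = \<bar>energy (curve J J' w) ?p - energy (curve J J' w) ?q\<bar>"
    if "w \<in> {u..v}" for w
    unfolding gap_def using ground_along_noncrit_interval[OF noncrit s0 _ that] by simp
  have "\<bar>gap (curve J J' v) - gap (curve J J' u)\<bar>
      \<le> \<bar>(energy (curve J J' v) ?p - energy (curve J J' v) ?q)
          - (energy (curve J J' u) ?p - energy (curve J J' u) ?q)\<bar>"
    using gap_eq[of u] gap_eq[of v] \<open>u < v\<close> by (simp add: abs_triangle_ineq3)
  also have "\<dots> \<le> 2 * (M * (curve_variation v - curve_variation u)) * real (card {e \<in> L. ?p e \<noteq> ?q e})"
    using \<open>?p \<in> S\<close> \<open>?q \<in> S\<close> bound curve_increment_le[of u v J _ M J'] \<open>u < v\<close>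
    by (intro energy_gap_change_le) (auto simp: abs_minus_commute)
  finally show ?thesis unfolding droplet_bd_def .
qed

lemma gap_curve_bound:
  assumes "0 \<le> t" and finite_crit: "finite {s. 0 \<le> s \<and> curve J J' s \<in> crit S L E}"
    and bound: "\<forall>e\<in>L. \<bar>J e\<bar> \<le> M \<and> \<bar>J' e\<bar> \<le> M" and "0 \<le> M"
    and droplet: "\<And>s. s \<in> {0..t} \<Longrightarrow> curve J J' s \<notin> crit S L E \<Longrightarrow>
                   card (droplet_bd S L E (curve J J' s) b) \<le> N"
  shows "\<bar>gap (curve J J' t) - gap (curve J J' 0)\<bar>
           \<le> 2 * M * real N * (curve_variation t - curve_variation 0)"
proof -
  let ?g = "\<lambda>s. 2 * M * real N * curve_variation s"
  have "\<bar>gap (curve J J' t) - gap (curve J J' 0)\<bar> \<le> ?g t - ?g 0"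
  proof (rule abs_diff_le_if_finite_exceptions[OF finite_crit \<open>0 \<le> t\<close>, where f="\<lambda>s. gap (curve J J' s)"])
    fix u v assume uv: "0 \<le> u" "u < v" "v \<le> t"
      and no_crit: "{s. 0 \<le> s \<and> curve J J' s \<in> crit S L E} \<inter> {u<..<v} = {}"
    have noncrit: "\<forall>s\<in>{u<..<v}. curve J J' s \<notin> crit S L E"
    proof
      fix s assume s: "s \<in> {u<..<v}"
      with uv have "0 \<le> s" by simp
      with s no_crit show "curve J J' s \<notin> crit S L E" by blast
    qed
    obtain s0 where s0: "s0 \<in> {u<..<v}" using dense[OF \<open>u < v\<close>] by auto
    have "0 \<le> M * (curve_variation v - curve_variation u)"
      using \<open>0 \<le> M\<close> curve_variation_mono[of u v] uv by simp
    moreover have "card (droplet_bd S L E (curve J J' s0) b) \<le> N"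
      using droplet s0 noncrit uv by auto
    ultimately have "2 * (M * (curve_variation v - curve_variation u))
          * real (card (droplet_bd S L E (curve J J' s0) b))
        \<le> 2 * (M * (curve_variation v - curve_variation u)) * real N"
      by (intro mult_left_mono) auto
    then show "\<bar>gap (curve J J' v) - gap (curve J J' u)\<bar> \<le> ?g v - ?g u"
      using gap_curve_increment[OF \<open>u < v\<close> noncrit s0 bound] by (simp add: algebra_simps)
  qed
  then show ?thesis by (simp add: algebra_simps)
qed

end

lemma finite_box: "finite (box (a :: int ^ 'd) c)"
proof -
  have "box a c \<subseteq> (\<lambda>f. \<chi> i. f i) ` (PiE UNIV (\<lambda>i. {a$i..c$i}))"
  proof
    fix x assume "x \<in> box a c"
    then show "x \<in> (\<lambda>f. \<chi> i. f i) ` (PiE UNIV (\<lambda>i. {a$i..c$i}))"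
      by (intro image_eqI[where x="\<lambda>i. x$i"]) (auto simp: box_def PiE_def extensional_def Pi_def vec_eq_iff)
  qed
  moreover have "finite (PiE (UNIV :: 'd set) (\<lambda>i. {a$i..c$i}))" by (intro finite_PiE) auto
  ultimately show ?thesis by (meson finite_imageI finite_subset)
qed

lemma nn_edge_two_points:
  "e \<in> nn_edges V \<Longrightarrow> \<exists>x y. e = {x, y} \<and> x \<in> V \<and> y \<in> V \<and> x \<noteq> y"
  unfolding nn_edges_def by fastforce

lemma spin_system_configs:
  assumes "finite V"
    and edges: "\<And>e. e \<in> L \<Longrightarrow> \<exists>x y. e = {x, y} \<and> x \<in> V \<and> y \<in> V \<and> x \<noteq> y"
    and cocycle: "\<forall>\<eta>\<in>configs V L. \<forall>\<eta>'\<in>configs V L. \<forall>\<eta>''\<in>configs V L.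
                   E \<eta> \<eta>'' = E \<eta> \<eta>' + E \<eta>' \<eta>''"
    and "b \<in> L"
  shows "spin_system (configs V L) L E b"
proof -
  have edge_value: "edge_cfg L eta e = eta x * eta y" if "e \<in> L" "e = {x, y}" "x \<noteq> y" for eta e x y
    using that by (simp add: edge_cfg_def)
  have "L \<subseteq> Pow V" using edges by blast
  then have "finite L" using \<open>finite V\<close> by (meson finite_Pow_iff finite_subset)
  have vanish: "\<eta> e = 0" if "\<eta> \<in> configs V L" "e \<notin> L" for \<eta> e
    using that unfolding configs_def edge_cfg_def by auto
  have spin: "\<eta> e = 1 \<or> \<eta> e = -1" if \<eta>: "\<eta> \<in> configs V L" and e: "e \<in> L" for \<eta> e
  proof -
    obtain eta where "\<eta> = edge_cfg L eta" and eta: "\<forall>x\<in>V. eta x = 1 \<or> eta x = -1"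
      using \<eta> unfolding configs_def by blast
    obtain x y where xy: "e = {x, y}" "x \<in> V" "y \<in> V" "x \<noteq> y" using edges[OF e] by blast
    have "\<eta> e = eta x * eta y" using \<open>\<eta> = edge_cfg L eta\<close> edge_value[OF e xy(1,4)] by simp
    moreover have "eta x = 1 \<or> eta x = -1" "eta y = 1 \<or> eta y = -1" using eta xy(2,3) by auto
    ultimately show ?thesis by auto
  qed
  have "configs V L \<subseteq> {f. \<forall>e. (e \<in> L \<longrightarrow> f e \<in> {-1, 1}) \<and> (e \<notin> L \<longrightarrow> f e = 0)}"
    using spin vanish by blast
  then have "finite (configs V L)"
    using finite_set_of_finite_funs[OF \<open>finite L\<close>, of "{-1, 1::real}" 0] finite_subset by blast
  obtain x y where b: "b = {x, y}" "x \<in> V" "y \<in> V" "x \<noteq> y" using edges[OF \<open>b \<in> L\<close>] by blast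
  \<comment> \<open>flipping the spin at one endpoint of b produces the minus configuration\<close>
  have in_configs: "edge_cfg L eta \<in> configs V L" if "\<forall>z\<in>V. eta z = 1 \<or> eta z = -1" for eta
    unfolding configs_def using that by blast
  have "edge_cfg L (\<lambda>_. 1) \<in> configs V L" "edge_cfg L (\<lambda>_. 1) b = 1"
    using edge_value[OF \<open>b \<in> L\<close> b(1,4)] by (auto intro!: in_configs)
  moreover have "edge_cfg L (\<lambda>z. if z = x then -1 else 1) \<in> configs V L"
    "edge_cfg L (\<lambda>z. if z = x then -1 else 1) b = -1"
    using edge_value[OF \<open>b \<in> L\<close> b(1,4)] b(4) by (auto intro!: in_configs)
  ultimately show ?thesis
    using \<open>finite L\<close> \<open>finite (configs V L)\<close> vanish spin cocycle
    by unfold_locales blast+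
qed

theorem proposition2p10:
  fixes a c :: "int ^ 'd"
    and E :: "((int ^ 'd) set \<Rightarrow> real) \<Rightarrow> ((int ^ 'd) set \<Rightarrow> real) \<Rightarrow> real"
    and b :: "(int ^ 'd) set"
    and J J' :: "(int ^ 'd) set \<Rightarrow> real"
    and t :: real
  defines "L \<equiv> nn_edges (box a c)"
  defines "S \<equiv> configs (box a c) L"
  assumes E_refl: "\<forall>eta\<in>S. E eta eta = 0"
    and E_cocycle: "\<forall>eta\<in>S. \<forall>eta'\<in>S. \<forall>eta''\<in>S. E eta eta'' = E eta eta' + E eta' eta''"
    and b_edge: "b \<in> L"
    and t_range: "0 \<le> t" "t \<le> 1"
    and max_defined: "{s \<in> {0..t}. curve J J' s \<notin> crit S L E} \<noteq> {}"
  shows "\<bar>flex S L E b (curve J J' t) - flex S L E b (curve J J' 0)\<bar>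
           \<le> 6 * sqrt t * Max ((\<lambda>e. max \<bar>J e\<bar> \<bar>J' e\<bar>) ` L)
               * real (Max ((\<lambda>s. card (droplet_bd S L E (curve J J' s) b))
                             ` {s \<in> {0..t}. curve J J' s \<notin> crit S L E}))"
proof -
  \<comment> \<open>E_refl is not needed: it is the case eta = eta' = eta'' of E_cocycle.\<close>
  interpret spin_system S L E b
    unfolding S_def using spin_system_configs[OF finite_box _ E_cocycle[unfolded S_def] b_edge]
    by (simp add: L_def nn_edge_two_points)
  define M where "M = Max ((\<lambda>e. max \<bar>J e\<bar> \<bar>J' e\<bar>) ` L)"
  define N where "N = Max ((\<lambda>s. card (droplet_bd S L E (curve J J' s) b))
                             ` {s \<in> {0..t}. curve J J' s \<notin> crit S L E})"
  have M: "\<forall>e\<in>L. \<bar>J e\<bar> \<le> M \<and> \<bar>J' e\<bar> \<le> M"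
  proof
    fix e assume "e \<in> L"
    then have "max \<bar>J e\<bar> \<bar>J' e\<bar> \<le> M" unfolding M_def using finite_L by (intro Max_ge) auto
    then show "\<bar>J e\<bar> \<le> M \<and> \<bar>J' e\<bar> \<le> M" by simp
  qed
  then have "0 \<le> M" using b_edge by force
  have "(\<lambda>s. card (droplet_bd S L E (curve J J' s) b)) ` {s \<in> {0..t}. curve J J' s \<notin> crit S L E}
      \<subseteq> {0..card L}"
    using finite_L by (auto simp: droplet_bd_def intro!: card_mono)
  then have N: "card (droplet_bd S L E (curve J J' s) b) \<le> N"
    if "s \<in> {0..t}" "curve J J' s \<notin> crit S L E" for s
    unfolding N_def using that by (intro Max_ge) (auto dest: finite_subset)
  obtain s0 where "0 \<le> s0" "curve J J' s0 \<notin> crit S L E" using max_defined by auto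
  then have "\<bar>gap (curve J J' t) - gap (curve J J' 0)\<bar>
      \<le> 2 * M * real N * (curve_variation t - curve_variation 0)"
    by (intro gap_curve_bound t_range(1) finite_crit_times M \<open>0 \<le> M\<close> N)
  also have "\<dots> \<le> 2 * M * real N * (3 * sqrt t)"
    using \<open>0 \<le> M\<close> curve_variation_le_sqrt[OF t_range] by (intro mult_left_mono) auto
  finally show ?thesis unfolding flex_eq_gap M_def N_def by (simp add: algebra_simps)
qed

end
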